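(* For any input distribution $\mathcal{D}$ and any $n,k\ge1$, $p\in[0,1]$, there exists a deterministic algorithm (which may depend on $\mathcal{D}$) for searching an element $z$, sampled from $\mathcal{D}$, in an unsorted list of length $n$, that runs in $k$ rounds, has success probability at least $p$, and issues at most $np\bigl(1-\frac{k-1}{2k}p\bigr)+1$ comparisons in expectation.
   Context: Unordered search in the comparison model: an array $\vec{x}=(x_1,\ldots,x_n)$ of distinct elements in no particular order and a target $z$ equal to exactly one entry $x_\ell$; $\mathcal{D}$ is a probability distribution over which entry $z$ is. Queries ask "How is $a$ compared to $b$?" for $a,b\in\{x_1,\ldots,x_n,z\}$, with answer "$<$", "$=$" or "$>$"; the goal is to output $\ell$. An algorithm runs in $k$ rounds if in each of $k$ rounds it submits a set of queries chosen depending only on answers of earlier rounds, then receives all answers. *)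

theory Defs
  imports "HOL-Probability.Probability"
begin

text \<open>Unordered search in the comparison model.
  Entries are indexed 0..n-1 (the paper uses 1..n). An item is either the
  target z or an array entry x_i.\<close>

datatype item = Zt | Xt nat

datatype cmp = Lt | Eq | Gt

type_synonym query = "item \<times> item"

type_synonym hist = "query \<Rightarrow> cmp option"

definition item_ok :: "nat \<Rightarrow> item \<Rightarrow> bool" where
  "item_ok n a = (case a of Zt \<Rightarrow> True | Xt i \<Rightarrow> i < n)"

definition valid_queries :: "nat \<Rightarrow> query set" where
  "valid_queries n = {(a, b). item_ok n a \<and> item_ok n b}"

fun val :: "(nat \<Rightarrow> 'a) \<Rightarrow> 'a \<Rightarrow> item \<Rightarrow> 'a" where
  "val x z Zt = z"
| "val x z (Xt i) = x i"

definition compare :: "'a::linorder \<Rightarrow> 'a \<Rightarrow> cmp" where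
  "compare u v = (if u < v then Lt else if u = v then Eq else Gt)"

definition answer :: "(nat \<Rightarrow> 'a::linorder) \<Rightarrow> 'a \<Rightarrow> query \<Rightarrow> cmp" where
  "answer x z q = compare (val x z (fst q)) (val x z (snd q))"

text \<open>A deterministic round-based algorithm is given by a query function
  Q r h : the set of queries submitted in round r, depending only on the answers h
  received in earlier rounds; and an alg_output function applied after the last round.\<close>

fun run :: "(nat \<Rightarrow> hist \<Rightarrow> query set) \<Rightarrow> (nat \<Rightarrow> 'a::linorder) \<Rightarrow> 'a \<Rightarrow> nat \<Rightarrow> hist" where
  "run Q x z 0 = Map.empty"
| "run Q x z (Suc r) =
     (let h = run Q x z r
      in h ++ (\<lambda>q. if q \<in> Q r h then Some (answer x z q) else None))"

fun cost :: "(nat \<Rightarrow> hist \<Rightarrow> query set) \<Rightarrow> (nat \<Rightarrow> 'a::linorder) \<Rightarrow> 'a \<Rightarrow> nat \<Rightarrow> nat" where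
  "cost Q x z 0 = 0"
| "cost Q x z (Suc r) = cost Q x z r + card (Q r (run Q x z r))"

definition wf_alg :: "nat \<Rightarrow> (nat \<Rightarrow> hist \<Rightarrow> query set) \<Rightarrow> bool" where
  "wf_alg n Q = (\<forall>r h. Q r h \<subseteq> valid_queries n)"

definition alg_output :: "(nat \<Rightarrow> hist \<Rightarrow> query set) \<Rightarrow> (hist \<Rightarrow> nat) \<Rightarrow> nat
    \<Rightarrow> (nat \<Rightarrow> 'a::linorder) \<Rightarrow> 'a \<Rightarrow> nat" where
  "alg_output Q out k x z = out (run Q x z k)"

end

theory Submission
  imports Defs
begin

text \<open>List the positions in order of non-increasing probability and scan this list in k blocks
  of about s = pn/k positions each: in round r the target is compared with the entries of ranks
  \<lceil>rs\<rceil>, ..., \<lceil>(r+1)s\<rceil> - 1, unless it has already been found. After k rounds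
  the \<lceil>pn\<rceil> most likely positions have been scanned, and by Chebyshev's sum inequality the
  m most likely of n positions carry probability at least m/n, hence at least p.
  A target of rank t costs at most 1 + s \<cdot> #{j < k. \<lceil>js\<rceil> \<le> t} comparisons,
  and the rank is at least \<lceil>js\<rceil> with probability at most 1 - js/n; summing over j gives
  1 + s \<cdot> \<Sum>j<k. (1 - jp/k) = np(1 - (k-1)p/(2k)) + 1.\<close>

lemma run_eq:
  "run Q x z r q = (if \<exists>j<r. q \<in> Q j (run Q x z j) then Some (answer x z q) else None)"
  by (induction r) (auto simp: Let_def map_add_def less_Suc_eq split: option.split)

lemma cost_eq_sum: "cost Q x z r = (\<Sum>j<r. card (Q j (run Q x z j)))"
  by (induction r) simp_all

lemma answer_Zt_Xt_eq_Eq_iff: "answer x z (Zt, Xt i) = Eq \<longleftrightarrow> z = x i"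
  by (auto simp: answer_def compare_def)

definition target_found :: "hist \<Rightarrow> bool" where
  "target_found h \<longleftrightarrow> (\<exists>i. h (Zt, Xt i) = Some Eq)"

definition found_index :: "hist \<Rightarrow> nat" where
  "found_index h = (SOME i. h (Zt, Xt i) = Some Eq)"

lemma target_found_run_iff:
  "target_found (run Q x z r) \<longleftrightarrow> (\<exists>j<r. \<exists>i. (Zt, Xt i) \<in> Q j (run Q x z j) \<and> z = x i)"
  by (auto simp: target_found_def run_eq answer_Zt_Xt_eq_Eq_iff)

lemma target_found_run_Suc_iff:
  "target_found (run Q x z (Suc r)) \<longleftrightarrow>
     target_found (run Q x z r) \<or> (\<exists>i. (Zt, Xt i) \<in> Q r (run Q x z r) \<and> z = x i)"
  unfolding target_found_run_iff by (auto simp: less_Suc_eq)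

lemma found_index_run:
  assumes "wf_alg n Q" "inj_on x {..<n}" "l < n" "target_found (run Q x (x l) r)"
  shows "found_index (run Q x (x l) r) = l"
proof -
  let ?h = "run Q x (x l) r"
  have "\<exists>i. ?h (Zt, Xt i) = Some Eq"
    using assms(4) by (simp add: target_found_def)
  then have "?h (Zt, Xt (found_index ?h)) = Some Eq"
    unfolding found_index_def by (rule someI_ex)
  then obtain j where "j < r" "(Zt, Xt (found_index ?h)) \<in> Q j (run Q x (x l) j)"
      and "x l = x (found_index ?h)"
    by (auto simp: run_eq answer_Zt_Xt_eq_Eq_iff split: if_splits)
  moreover from calculation(2) have "found_index ?h < n"
    using assms(1) unfolding wf_alg_def by (force simp: valid_queries_def item_ok_def)
  ultimately show ?thesis
    using assms(2,3) by (auto dest: inj_onD)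
qed

definition probe_block :: "nat list \<Rightarrow> nat \<Rightarrow> nat \<Rightarrow> query set" where
  "probe_block xs a b = (\<lambda>t. (Zt, Xt (xs ! t))) ` {a..<min b (length xs)}"

definition block_search :: "nat list \<Rightarrow> (nat \<Rightarrow> nat) \<Rightarrow> nat \<Rightarrow> hist \<Rightarrow> query set" where
  "block_search xs a r h = (if target_found h then {} else probe_block xs (a r) (a (Suc r)))"

lemma wf_alg_block_search:
  assumes "set xs = {..<n}"
  shows "wf_alg n (block_search xs a)"
  using assms nth_mem
  by (fastforce simp: wf_alg_def block_search_def probe_block_def valid_queries_def item_ok_def)

lemma card_probe_block:
  "distinct xs \<Longrightarrow> card (probe_block xs a b) = min b (length xs) - a"
  unfolding probe_block_def
  by (subst card_image) (auto simp: inj_on_def nth_eq_iff_index_eq)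

lemma probe_block_hits_iff:
  assumes "distinct xs" "set xs = {..<n}" "inj_on x {..<n}" "t < n"
  shows "(\<exists>i. (Zt, Xt i) \<in> probe_block xs a b \<and> x (xs ! t) = x i) \<longleftrightarrow> a \<le> t \<and> t < b"
proof -
  have len: "length xs = n"
    using assms(1,2) distinct_card by fastforce
  have "x (xs ! t) = x (xs ! s) \<longleftrightarrow> t = s" if "s < n" for s
    using assms that len nth_mem inj_onD[OF assms(3)] nth_eq_iff_index_eq by fastforce
  then have "(\<exists>s\<in>{a..<min b n}. x (xs ! t) = x (xs ! s)) \<longleftrightarrow> a \<le> t \<and> t < b"
    using assms(4) by auto
  then show ?thesis
    using len by (auto simp: probe_block_def)
qed

lemma block_search_found_iff:
  assumes "distinct xs" "set xs = {..<n}" "inj_on x {..<n}" "t < n"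
    and "mono a" "a 0 = 0"
  shows "target_found (run (block_search xs a) x (x (xs ! t)) r) \<longleftrightarrow> t < a r"
proof (induction r)
  case 0
  then show ?case by (simp add: target_found_def assms(6))
next
  case (Suc r)
  let ?h = "run (block_search xs a) x (x (xs ! t)) r"
  have "block_search xs a r ?h = (if t < a r then {} else probe_block xs (a r) (a (Suc r)))"
    unfolding block_search_def[of xs a r ?h] Suc ..
  moreover have "a r \<le> a (Suc r)"
    using assms(5) by (simp add: monoD)
  ultimately show ?case
    unfolding target_found_run_Suc_iff Suc using probe_block_hits_iff[OF assms(1-4)] by auto
qed

lemma sum_increments_below_telescope:
  fixes a :: "nat \<Rightarrow> nat"
  assumes "mono a"
  shows "(\<Sum>j<k. if a j \<le> t then a (Suc j) - a j else 0) = a (card {j. j < k \<and> a j \<le> t}) - a 0"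
proof (induction k)
  case 0
  then show ?case by simp
next
  case (Suc k)
  show ?case
  proof (cases "a k \<le> t")
    case True
    have "a j \<le> t" if "j \<le> k" for j
      using monoD[OF assms that] True by simp
    then have "{j. j < Suc k \<and> a j \<le> t} = {..<Suc k}" "{j. j < k \<and> a j \<le> t} = {..<k}"
      by auto
    moreover have "a 0 \<le> a k" "a k \<le> a (Suc k)"
      using monoD[OF assms] by simp_all
    ultimately show ?thesis
      using Suc True by simp
  next
    case False
    then have "{j. j < Suc k \<and> a j \<le> t} = {j. j < k \<and> a j \<le> t}"
      by (auto simp: less_Suc_eq)
    then show ?thesis
      using Suc False by simp
  qed
qed

lemma block_search_cost_le:
  assumes "distinct xs" "set xs = {..<n}" "inj_on x {..<n}" "t < n" "mono a" "a 0 = 0"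
  shows "cost (block_search xs a) x (x (xs ! t)) k \<le> a (card {j. j < k \<and> a j \<le> t})"
proof -
  have "length xs = n"
    using assms(1,2) distinct_card by fastforce
  then have "card (block_search xs a j (run (block_search xs a) x (x (xs ! t)) j))
      \<le> (if a j \<le> t then a (Suc j) - a j else 0)" for j
    using block_search_found_iff[OF assms] card_probe_block[OF assms(1)]
    by (simp add: block_search_def[of xs a j] diff_le_mono)
  then have "cost (block_search xs a) x (x (xs ! t)) k
      \<le> (\<Sum>j<k. if a j \<le> t then a (Suc j) - a j else 0)"
    unfolding cost_eq_sum by (rule sum_mono)
  then show ?thesis
    using sum_increments_below_telescope[OF assms(5)] assms(6) by simp
qed

lemma sum_nth_take:
  "distinct xs \<Longrightarrow> m \<le> length xs \<Longrightarrow> (\<Sum>t<m. f (xs ! t)) = sum f (set (take m xs))"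
  by (simp add: sum_list_distinct_conv_sum_set[symmetric] sum_list_sum_nth atLeast0LessThan
      min_absorb2)

lemma sum_pmf_nth_eq_1:
  "distinct xs \<Longrightarrow> set_pmf D \<subseteq> set xs \<Longrightarrow> (\<Sum>t<length xs. pmf D (xs ! t)) = 1"
  using sum_nth_take[of xs "length xs" "pmf D"] sum_pmf_eq_1[of "set xs" D] by simp

lemma block_search_success_prob:
  assumes "distinct xs" "set xs = {..<n}" "inj_on x {..<n}" "mono a" "a 0 = 0" "a k \<le> n"
  shows "(\<Sum>t<a k. pmf D (xs ! t))
           \<le> measure_pmf.prob D {l. alg_output (block_search xs a) found_index k x (x l) = l}"
proof -
  have len: "length xs = n"
    using assms(1,2) distinct_card by fastforce
  have "set (take (a k) xs) \<subseteq> {l. alg_output (block_search xs a) found_index k x (x l) = l}"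
  proof
    fix l assume "l \<in> set (take (a k) xs)"
    then obtain t where "t < a k" "l = xs ! t"
      using assms(6) len by (auto simp: in_set_conv_nth)
    moreover have "l < n"
      using calculation assms(2,6) len nth_mem by fastforce
    ultimately show "l \<in> {l. alg_output (block_search xs a) found_index k x (x l) = l}"
      using block_search_found_iff[OF assms(1-3) _ assms(4,5)] assms(6)
        found_index_run[OF wf_alg_block_search[OF assms(2)] assms(3)]
      by (simp add: alg_output_def)
  qed
  then have "measure_pmf.prob D (set (take (a k) xs))
      \<le> measure_pmf.prob D {l. alg_output (block_search xs a) found_index k x (x l) = l}"
    by (intro measure_pmf.finite_measure_mono) auto
  then show ?thesis
    using assms(1,6) len by (simp add: sum_nth_take measure_measure_pmf_finite)
qed

lemma sum_weighted_count_eq_sum_tails: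
  fixes a :: "nat \<Rightarrow> nat" and w :: "nat \<Rightarrow> real"
  shows "(\<Sum>t<n. real (card {j. j < k \<and> a j \<le> t}) * w t) = (\<Sum>j<k. \<Sum>t\<in>{a j..<n}. w t)"
proof -
  have "(\<Sum>t<n. real (card {j. j < k \<and> a j \<le> t}) * w t)
      = (\<Sum>t\<in>{..<n}. \<Sum>j\<in>{j. j \<in> {..<k} \<and> a j \<le> t}. w t)"
    by simp
  also have "\<dots> = (\<Sum>j\<in>{..<k}. \<Sum>t\<in>{t. t \<in> {..<n} \<and> a j \<le> t}. w t)"
    by (rule sum.swap_restrict[of "{..<n}" "{..<k}" "\<lambda>t j. w t" "\<lambda>t j. a j \<le> t"]) simp_all
  also have "\<dots> = (\<Sum>j<k. \<Sum>t\<in>{a j..<n}. w t)"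
    by (intro sum.cong) auto
  finally show ?thesis .
qed

lemma block_search_expected_cost:
  assumes "set_pmf D \<subseteq> {..<n}" "distinct xs" "set xs = {..<n}" "inj_on x {..<n}"
    and "mono a" "a 0 = 0" "a k \<le> n" "\<And>r. real (a r) \<le> s * real r + 1" "s \<ge> 0"
  shows "measure_pmf.expectation D (\<lambda>l. real (cost (block_search xs a) x (x l) k))
           \<le> 1 + s * (\<Sum>j<k. 1 - (\<Sum>t<a j. pmf D (xs ! t)))"
proof -
  let ?cost = "\<lambda>l. real (cost (block_search xs a) x (x l) k)"
  let ?w = "\<lambda>t. pmf D (xs ! t)"
  have len: "length xs = n"
    using assms(2,3) distinct_card by fastforce
  have total: "(\<Sum>t<n. ?w t) = 1"
    using sum_pmf_nth_eq_1[OF assms(2)] assms(1,3) len by simp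
  have "measure_pmf.expectation D ?cost = (\<Sum>l\<in>set xs. ?cost l * pmf D l)"
    using assms(1,3) by (intro integral_measure_pmf_real) auto
  also have "\<dots> = (\<Sum>t<n. ?cost (xs ! t) * ?w t)"
    using sum_nth_take[OF assms(2), of n "\<lambda>l. ?cost l * pmf D l"] len by simp
  also have "\<dots> \<le> (\<Sum>t<n. (1 + s * real (card {j. j < k \<and> a j \<le> t})) * ?w t)"
  proof (intro sum_mono mult_right_mono)
    fix t assume "t \<in> {..<n}"
    then have "cost (block_search xs a) x (x (xs ! t)) k \<le> a (card {j. j < k \<and> a j \<le> t})"
      using block_search_cost_le[OF assms(2-4) _ assms(5,6)] by simp
    then have "?cost (xs ! t) \<le> real (a (card {j. j < k \<and> a j \<le> t}))"
      by simp
    then show "?cost (xs ! t) \<le> 1 + s * real (card {j. j < k \<and> a j \<le> t})"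
      using assms(8)[of "card {j. j < k \<and> a j \<le> t}"] by linarith
  qed simp
  also have "\<dots> = (\<Sum>t<n. ?w t) + s * (\<Sum>t<n. real (card {j. j < k \<and> a j \<le> t}) * ?w t)"
    by (simp add: algebra_simps sum.distrib sum_distrib_left)
  also have "\<dots> = 1 + s * (\<Sum>j<k. \<Sum>t\<in>{a j..<n}. ?w t)"
    by (simp only: total sum_weighted_count_eq_sum_tails)
  also have "\<dots> = 1 + s * (\<Sum>j<k. 1 - (\<Sum>t<a j. ?w t))"
  proof -
    have "a j \<le> n" if "j < k" for j
      using assms(5,7) that by (meson le_trans less_imp_le monoD)
    then have "(\<Sum>t\<in>{a j..<n}. ?w t) = 1 - (\<Sum>t<a j. ?w t)" if "j < k" for j
      using sum_diff_nat_ivl[of 0 "a j" n ?w] total that by (simp add: atLeast0LessThan)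
    then show ?thesis by simp
  qed
  finally show ?thesis .
qed

lemma nonincreasing_prefix_sum_ge:
  fixes w :: "nat \<Rightarrow> real"
  assumes "\<And>i j. i \<le> j \<Longrightarrow> j < n \<Longrightarrow> w j \<le> w i" "m \<le> n"
  shows "real m * (\<Sum>t<n. w t) \<le> real n * (\<Sum>t<m. w t)"
proof -
  let ?tail = "\<lambda>t. if m \<le> t then 1 else 0 :: real"
  let ?P = "\<Sum>t=0..<m. w t" and ?T = "\<Sum>t=m..<n. w t"
  have split: "(\<Sum>t=0..<n. g t) = (\<Sum>t=0..<m. g t) + (\<Sum>t=m..<n. g t)" for g :: "nat \<Rightarrow> real"
    using sum.atLeastLessThan_concat[of 0 m n g] assms(2) by simp
  have "real n * (\<Sum>t=0..<n. ?tail t * w t) \<le> (\<Sum>t=0..<n. ?tail t) * (\<Sum>t=0..<n. w t)"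
    by (rule Chebyshev_sum_upper) (use assms(1) in auto)
  moreover have "(\<Sum>t=0..<n. ?tail t * w t) = ?T"
    by (subst split) simp
  moreover have "(\<Sum>t=0..<n. ?tail t) = real n - real m"
    by (subst split) (simp add: assms(2))
  ultimately have "real n * ?T \<le> (real n - real m) * (?P + ?T)"
    by (simp only: split[of w])
  then show ?thesis
    by (simp add: split[of w, unfolded atLeast0LessThan] atLeast0LessThan algebra_simps)
qed

definition pmf_order :: "nat pmf \<Rightarrow> nat \<Rightarrow> nat list" where
  "pmf_order D n = sort_key (\<lambda>i. - pmf D i) [0..<n]"

lemma distinct_pmf_order: "distinct (pmf_order D n)"
  by (simp add: pmf_order_def)

lemma length_pmf_order: "length (pmf_order D n) = n"
  by (simp add: pmf_order_def)

lemma set_pmf_order: "set (pmf_order D n) = {..<n}"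
  by (auto simp: pmf_order_def)

lemma pmf_order_prefix_mass:
  assumes "set_pmf D \<subseteq> {..<n}" "m \<le> n"
  shows "real m / real n \<le> (\<Sum>t<m. pmf D (pmf_order D n ! t))"
proof (cases "n = 0")
  case False
  let ?w = "\<lambda>t. pmf D (pmf_order D n ! t)"
  have "sorted (map (\<lambda>i. - pmf D i) (pmf_order D n))"
    by (simp add: pmf_order_def)
  then have "?w j \<le> ?w i" if "i \<le> j" "j < n" for i j
    using sorted_nth_mono[OF \<open>sorted _\<close>, of i j] that by (simp add: length_pmf_order)
  from nonincreasing_prefix_sum_ge[of n ?w, OF this assms(2)] have "real m \<le> real n * (\<Sum>t<m. ?w t)"
    using sum_pmf_nth_eq_1[of "pmf_order D n" D] distinct_pmf_order assms(1)
    by (simp add: set_pmf_order length_pmf_order)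
  with False show ?thesis
    by (simp add: divide_le_eq mult.commute)
qed (use assms(2) in simp)

definition scan_prefix :: "real \<Rightarrow> nat \<Rightarrow> nat" where
  "scan_prefix s r = nat \<lceil>real r * s\<rceil>"

lemma scan_prefix_0 [simp]: "scan_prefix s 0 = 0"
  by (simp add: scan_prefix_def)

lemma mono_scan_prefix: "s \<ge> 0 \<Longrightarrow> mono (scan_prefix s)"
  unfolding scan_prefix_def by (intro monoI nat_mono ceiling_mono mult_right_mono) auto

lemma scan_prefix_bounds:
  "s \<ge> 0 \<Longrightarrow> real r * s \<le> real (scan_prefix s r) \<and> real (scan_prefix s r) \<le> s * real r + 1"
  unfolding scan_prefix_def by (simp add: mult.commute)

lemma scan_prefix_le:
  assumes "s \<ge> 0" "real k * s \<le> real n"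
  shows "scan_prefix s k \<le> n"
  using assms by (simp add: scan_prefix_def ceiling_le_iff nat_le_iff mult.commute)

lemma pmf_order_block_search:
  fixes x :: "nat \<Rightarrow> 'a::linorder"
  assumes "set_pmf D \<subseteq> {..<n}" "inj_on x {..<n}" "s \<ge> 0" "real k * s \<le> real n"
  defines "Q \<equiv> block_search (pmf_order D n) (scan_prefix s)"
  shows "real k * s / real n \<le> measure_pmf.prob D {l. alg_output Q found_index k x (x l) = l}"
    and "measure_pmf.expectation D (\<lambda>l. real (cost Q x (x l) k))
           \<le> 1 + s * (\<Sum>j<k. 1 - real j * (s / real n))"
proof -
  let ?xs = "pmf_order D n" and ?a = "scan_prefix s"
  note xs = distinct_pmf_order[of D n] set_pmf_order[of D n]
  note a = mono_scan_prefix[OF assms(3)] scan_prefix_0 scan_prefix_le[OF assms(3,4)]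
  have mass: "real j * (s / real n) \<le> (\<Sum>t<?a j. pmf D (?xs ! t))" if "j \<le> k" for j
  proof -
    have "?a j \<le> n"
      using a(1,3) that by (meson le_trans monoD)
    have "real j * (s / real n) \<le> real (?a j) / real n"
      using scan_prefix_bounds[OF assms(3), of j] by (simp add: divide_right_mono)
    also have "\<dots> \<le> (\<Sum>t<?a j. pmf D (?xs ! t))"
      by (rule pmf_order_prefix_mass[OF assms(1) \<open>?a j \<le> n\<close>])
    finally show ?thesis .
  qed
  show "real k * s / real n \<le> measure_pmf.prob D {l. alg_output Q found_index k x (x l) = l}"
    using mass[of k] block_search_success_prob[OF xs assms(2) a, of D] unfolding Q_def by simp
  have "measure_pmf.expectation D (\<lambda>l. real (cost Q x (x l) k))
      \<le> 1 + s * (\<Sum>j<k. 1 - (\<Sum>t<?a j. pmf D (?xs ! t)))"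
    unfolding Q_def using scan_prefix_bounds[OF assms(3)]
    by (intro block_search_expected_cost[OF assms(1) xs assms(2) a] assms(3)) simp
  also have "\<dots> \<le> 1 + s * (\<Sum>j<k. 1 - real j * (s / real n))"
    using mass assms(3) by (intro add_left_mono mult_left_mono sum_mono) auto
  finally show "measure_pmf.expectation D (\<lambda>l. real (cost Q x (x l) k))
      \<le> 1 + s * (\<Sum>j<k. 1 - real j * (s / real n))" .
qed

lemma sum_one_minus_linear:
  "(\<Sum>j<k. 1 - real j * c) = real k - c * (real k * (real k - 1) / 2)"
  by (induction k) (simp_all add: field_simps)

theorem proposition11:
  fixes D :: "nat pmf" and n k :: nat and p :: real
  assumes "set_pmf D \<subseteq> {..<n}"
    and "n \<ge> 1" and "k \<ge> 1"
    and "0 \<le> p" and "p \<le> 1"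
  shows "\<exists>(Q :: nat \<Rightarrow> hist \<Rightarrow> query set) (out :: hist \<Rightarrow> nat).
           wf_alg n Q \<and>
           (\<forall>x :: nat \<Rightarrow> 'a::linorder. inj_on x {..<n} \<longrightarrow>
              measure_pmf.prob D {l. alg_output Q out k x (x l) = l} \<ge> p \<and>
              measure_pmf.expectation D (\<lambda>l. real (cost Q x (x l) k))
                \<le> real n * p * (1 - (real k - 1) / (2 * real k) * p) + 1)"
proof -
  define s where "s = p * real n / real k"
  have s: "s \<ge> 0" "real k * s = p * real n"
    using assms by (simp_all add: s_def)
  then have "real k * s \<le> real n"
    using assms(2,5) by (simp add: mult_left_le_one_le)
  note search = pmf_order_block_search[OF assms(1) _ s(1) this]
  have success: "real k * s / real n = p"
    using s(2) assms(2) by simp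
  have cost: "1 + s * (\<Sum>j<k. 1 - real j * (s / real n))
      = real n * p * (1 - (real k - 1) / (2 * real k) * p) + 1"
    unfolding sum_one_minus_linear using assms(2,3) by (simp add: s_def field_simps)
  show ?thesis
  proof (intro exI conjI allI impI)
    show "wf_alg n (block_search (pmf_order D n) (scan_prefix s))"
      by (rule wf_alg_block_search[OF set_pmf_order])
  next
    fix x :: "nat \<Rightarrow> 'a" assume "inj_on x {..<n}"
    from search[OF this] show
      "p \<le> measure_pmf.prob D {l. alg_output (block_search (pmf_order D n) (scan_prefix s)) found_index k x (x l) = l}"
      "measure_pmf.expectation D (\<lambda>l. real (cost (block_search (pmf_order D n) (scan_prefix s)) x (x l) k))
         \<le> real n * p * (1 - (real k - 1) / (2 * real k) * p) + 1"
      unfolding success cost by simp_all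
  qed
qed

end
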